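(* There is an absolute constant $c > 0$ such that the following holds for all integers $r \ge 2$ and $M > r$. For every streaming algorithm that maintains a stratified random sample over a stream with $r$ strata using a memory of $M$ records, there exists an input stream such that, after processing it, the variance $V$ of the algorithm's stratified random sample satisfies $V \ge c\cdot r\cdot V^*$, where $V^*$ is the optimal (smallest) variance achievable by any stratified random sample of the same stream using memory of $M$ records. In other words, in the worst case, any such streaming algorithm has multiplicative error $\Omega(r)$ relative to the optimal variance.
   Context: A stream is a sequence of real values, each labeled with a stratum in $\{1,\dots,r\}$. After a prefix of the stream has been seen, let $n_i$ be the number of elements of stratum $i$ seen, $n = \sum_i n_i$, and $\sigma_i$ the population standard deviation of the values of stratum $i$ seen. A streaming algorithm processes the elements one at a time, can store at most $M$ elements at any time, and cannot access an element later unless it is currently stored; at every time it holds, for each stratum $i$, a sample $S_i$ (of size $s_i$) chosen uniformly at random without replacement from the elements of stratum $i$ seen so far, with $\sum_i s_i \le M$. The variance of its sample is $V = \frac{1}{n^2}\sum_i \frac{n_i^2\sigma_i^2}{s_i} - \frac{1}{n^2}\sum_i n_i\sigma_i^2$. $V^*$ is the minimum of this expression over all per-stratum sample sizes $0\le s_i \le n_i$ with $\sum_i s_i = M$ (i.e. the variance of a variance-optimal offline stratified random sample of the whole stream seen so far with memory $M$). *)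

theory Defs
  imports "HOL-Probability.Probability"
begin

text \<open>A stream: list of (value, stratum label) pairs. Elements are identified by their
  position in the stream (0-based).\<close>
type_synonym stream = "(real \<times> nat) list"

text \<open>State of a streaming algorithm after processing a prefix: the set of stored
  stream positions, and for every stratum i the sample S_i (a set of positions).\<close>
type_synonym alg_state = "nat set \<times> (nat \<Rightarrow> nat set)"

text \<open>A run: the state after processing t elements, for t = 0, 1, ..., length of stream.\<close>
type_synonym run = "nat \<Rightarrow> alg_state"

definition valid_stream :: "nat \<Rightarrow> stream \<Rightarrow> bool" where
  "valid_stream r xs \<longleftrightarrow> (\<forall>p\<in>set xs. snd p \<in> {1..r})"

definition stratum_vals :: "stream \<Rightarrow> nat \<Rightarrow> real list" where
  "stratum_vals xs i = map fst (filter (\<lambda>p. snd p = i) xs)"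

definition stratum_count :: "stream \<Rightarrow> nat \<Rightarrow> nat" where
  "stratum_count xs i = length (stratum_vals xs i)"

text \<open>Population standard deviation of the values of stratum i (0 if the stratum is empty).\<close>
definition stratum_sd :: "stream \<Rightarrow> nat \<Rightarrow> real" where
  "stratum_sd xs i =
     (let ys = stratum_vals xs i; m = sum_list ys / real (length ys)
      in sqrt (sum_list (map (\<lambda>y. (y - m)^2) ys) / real (length ys)))"

text \<open>Variance of a stratified random sample with per-stratum sizes s i:
  (1/n^2) * sum_i n_i^2 sigma_i^2 / s_i - (1/n^2) * sum_i n_i sigma_i^2.
  If some stratum with positive n_i sigma_i^2 gets no sample, the variance is infinite.
  (For s_i = 0 and n_i sigma_i^2 = 0 the term 0/0 is read as 0.)\<close>
definition srs_variance :: "nat \<Rightarrow> stream \<Rightarrow> (nat \<Rightarrow> nat) \<Rightarrow> ennreal" where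
  "srs_variance r xs s =
     (let n = real (length xs);
          ni = (\<lambda>i. real (stratum_count xs i));
          \<sigma> = stratum_sd xs
      in if \<exists>i\<in>{1..r}. s i = 0 \<and> ni i * (\<sigma> i)^2 \<noteq> 0 then \<top>
         else ennreal ((1 / n^2) * (\<Sum>i=1..r. (ni i)^2 * (\<sigma> i)^2 / real (s i))
                       - (1 / n^2) * (\<Sum>i=1..r. ni i * (\<sigma> i)^2)))"

definition opt_variance :: "nat \<Rightarrow> nat \<Rightarrow> stream \<Rightarrow> ennreal" where
  "opt_variance r M xs =
     (INF s \<in> {s. (\<forall>i\<in>{1..r}. s i \<le> stratum_count xs i) \<and> (\<Sum>i=1..r. s i) = M}.
        srs_variance r xs s)"

definition stratum_positions :: "stream \<Rightarrow> nat \<Rightarrow> nat \<Rightarrow> nat set" where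
  "stratum_positions xs i t = {k. k < t \<and> k < length xs \<and> snd (xs ! k) = i}"

definition prefix_run :: "nat \<Rightarrow> run \<Rightarrow> run" where
  "prefix_run t \<rho> = (\<lambda>k. if k \<le> t then \<rho> k else ({}, \<lambda>_. {}))"

text \<open>A (randomized) streaming algorithm with r strata and memory M, given as the
  distribution of its run on each stream.  Conditions:
  (1) online: the distribution of the run up to time t depends only on the first t elements;
  (2) at every time t at most M elements are stored, only seen elements are stored, and an
      element not stored at time t can never be stored later (stored(t+1) is a subset of
      stored(t) plus the new element t);
  (3) each sample S_i consists of stored elements of stratum i seen so far, and the total
      sample size is at most M;
  (4) S_i is uniform without replacement given its size: any two subsets of the stratum-i
      elements seen so far of equal cardinality are equally likely as S_i.\<close>
definition stratified_streaming_alg :: "nat \<Rightarrow> nat \<Rightarrow> (stream \<Rightarrow> run pmf) \<Rightarrow> bool" where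
  "stratified_streaming_alg r M A \<longleftrightarrow>
     (\<forall>xs ys t. valid_stream r xs \<and> valid_stream r ys \<and> t \<le> length xs \<and> t \<le> length ys
         \<and> take t xs = take t ys
         \<longrightarrow> map_pmf (prefix_run t) (A xs) = map_pmf (prefix_run t) (A ys)) \<and>
     (\<forall>xs. valid_stream r xs \<longrightarrow>
        (\<forall>\<rho>\<in>set_pmf (A xs). \<forall>t\<le>length xs.
            fst (\<rho> t) \<subseteq> {..<t} \<and> card (fst (\<rho> t)) \<le> M \<and>
            (t < length xs \<longrightarrow> fst (\<rho> (Suc t)) \<subseteq> fst (\<rho> t) \<union> {t}) \<and>
            (\<forall>i\<in>{1..r}. snd (\<rho> t) i \<subseteq> fst (\<rho> t) \<inter> stratum_positions xs i t) \<and>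
            (\<Sum>i=1..r. card (snd (\<rho> t) i)) \<le> M) \<and>
        (\<forall>t\<le>length xs. \<forall>i\<in>{1..r}. \<forall>B C.
            B \<subseteq> stratum_positions xs i t \<and> C \<subseteq> stratum_positions xs i t \<and> card B = card C
            \<longrightarrow> measure_pmf.prob (A xs) {\<rho>. snd (\<rho> t) i = B}
                = measure_pmf.prob (A xs) {\<rho>. snd (\<rho> t) i = C}))"

definition alg_variance :: "nat \<Rightarrow> stream \<Rightarrow> run \<Rightarrow> ennreal" where
  "alg_variance r xs \<rho> = srs_variance r xs (\<lambda>i. card (snd (\<rho> (length xs)) i))"

end

theory Submission
  imports Defs
begin

text \<open>The adversary first streams \<open>M\<close> zeros into each of the \<open>r\<close> strata.  The memory then
  holds, in expectation, at most \<open>M / r\<close> elements of some stratum \<open>j\<close>, and it cannot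
  recover discarded elements.  Next come \<open>M\<close> ones of stratum \<open>j\<close>: now \<open>j\<close> is the only
  stratum with positive variance, so the optimal sample spends all its \<open>M\<close> records on it.
  The algorithm's sample of stratum \<open>j\<close> is uniform given its size, so half of it is expected
  to come from the old zeros; hence its expected size is at most \<open>2 M / r\<close>, and by convexity
  of \<open>s \<mapsto> 1 / s\<close> its expected variance is \<open>\<Omega>(r)\<close> times the optimum.\<close>

lemma sum_subsets_containing_eq:
  assumes "x \<in> P" "y \<in> P"
    and inv: "\<And>B C. B \<subseteq> P \<Longrightarrow> C \<subseteq> P \<Longrightarrow> card B = card C \<Longrightarrow> q B = q C"
  shows "(\<Sum>B\<in>{B\<in>Pow P. x \<in> B}. q B) = (\<Sum>B\<in>{B\<in>Pow P. y \<in> B}. q B)"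
proof (rule sum.reindex_bij_witness[where i="image (Transposition.transpose x y)"
                                      and j="image (Transposition.transpose x y)"])
  fix B assume "B \<in> {B\<in>Pow P. x \<in> B}"
  then show "q (Transposition.transpose x y ` B) = q B"
    using assms(1,2) by (intro inv) (auto simp: card_image, auto simp: Transposition.transpose_def)
qed (use assms(1,2) in \<open>auto simp: image_image Transposition.transpose_def\<close>)

lemma sum_card_Int_eq_sum_containing:
  assumes "finite P" "X \<subseteq> P"
  shows "(\<Sum>B\<in>Pow P. real (card (B \<inter> X)) * q B) = (\<Sum>x\<in>X. \<Sum>B\<in>{B\<in>Pow P. x \<in> B}. q B)"
proof -
  have fX: "finite X" using assms finite_subset by blast
  have "(\<Sum>B\<in>Pow P. real (card (B \<inter> X)) * q B) = (\<Sum>B\<in>Pow P. \<Sum>x\<in>X. if x \<in> B then q B else 0)"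
    using fX by (intro sum.cong refl) (simp add: sum.If_cases Int_commute)
  also have "\<dots> = (\<Sum>x\<in>X. \<Sum>B\<in>Pow P. if x \<in> B then q B else 0)"
    by (rule sum.swap)
  also have "\<dots> = (\<Sum>x\<in>X. \<Sum>B\<in>{B\<in>Pow P. x \<in> B}. q B)"
    by (intro sum.cong refl sum.inter_filter[symmetric]) (simp add: assms(1))
  finally show ?thesis .
qed

lemma sum_card_Int_exchangeable:
  assumes "finite P" "X \<subseteq> P"
    and inv: "\<And>B C. B \<subseteq> P \<Longrightarrow> C \<subseteq> P \<Longrightarrow> card B = card C \<Longrightarrow> q B = q C"
  shows "real (card P) * (\<Sum>B\<in>Pow P. real (card (B \<inter> X)) * q B)
       = real (card X) * (\<Sum>B\<in>Pow P. real (card B) * q B)"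
proof (cases "P = {}")
  case False
  then obtain x0 where x0: "x0 \<in> P" by blast
  define h where "h = (\<Sum>B\<in>{B\<in>Pow P. x0 \<in> B}. q B)"
  have const: "(\<Sum>B\<in>{B\<in>Pow P. x \<in> B}. q B) = h" if "x \<in> P" for x
    unfolding h_def using that x0 inv by (rule sum_subsets_containing_eq)
  have "(\<Sum>B\<in>Pow P. real (card B) * q B) = (\<Sum>B\<in>Pow P. real (card (B \<inter> P)) * q B)"
    by (intro sum.cong refl) (auto simp: Int_absorb2)
  then show ?thesis
    using sum_card_Int_eq_sum_containing[OF assms(1) assms(2), of q]
      sum_card_Int_eq_sum_containing[OF assms(1) order_refl, of q] const assms(2)
    by (simp add: subset_iff)
qed (use assms in simp)

lemma expectation_card_Int_exchangeable:
  fixes Q :: "'a set pmf"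
  assumes "finite P" "X \<subseteq> P" "set_pmf Q \<subseteq> Pow P"
    and "\<And>B C. B \<subseteq> P \<Longrightarrow> C \<subseteq> P \<Longrightarrow> card B = card C \<Longrightarrow> pmf Q B = pmf Q C"
  shows "real (card P) * measure_pmf.expectation Q (\<lambda>B. real (card (B \<inter> X)))
       = real (card X) * measure_pmf.expectation Q (\<lambda>B. real (card B))"
proof -
  have "measure_pmf.expectation Q f = (\<Sum>B\<in>Pow P. f B * pmf Q B)" for f :: "'a set \<Rightarrow> real"
    using assms(1,3) by (intro integral_measure_pmf_real) auto
  then show ?thesis
    using sum_card_Int_exchangeable[OF assms(1,2,4)] by simp
qed

lemma ennreal_integral_le_nn_integral:
  fixes g :: "'a \<Rightarrow> real"
  assumes "integrable M g"
  shows "ennreal (integral\<^sup>L M g) \<le> (\<integral>\<^sup>+x. ennreal (g x) \<partial>M)"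
proof -
  have pos: "integrable M (\<lambda>x. max 0 (g x))" using assms by auto
  have "ennreal (integral\<^sup>L M g) \<le> ennreal (\<integral>x. max 0 (g x) \<partial>M)"
    by (intro ennreal_leI integral_mono[OF assms pos]) auto
  also have "\<dots> = (\<integral>\<^sup>+x. ennreal (g x) \<partial>M)"
    using pos by (simp add: nn_integral_eq_integral[symmetric] ennreal_max_0)
  finally show ?thesis .
qed

lemma inverse_ge_tangent:
  fixes s m :: real
  assumes "s > 0" "m > 0"
  shows "2 / m - s / m^2 \<le> 1 / s"
proof -
  have "1 / s - (2 / m - s / m^2) = (m - s)^2 / (s * m^2)"
    using assms by (simp add: field_simps power2_eq_square)
  moreover have "(m - s)^2 / (s * m^2) \<ge> 0" using assms by simp
  ultimately show ?thesis by linarith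
qed

text \<open>A Jensen bound for the convex map \<open>s \<mapsto> c / s\<close>, obtained from its tangent at \<open>m\<close>.\<close>
lemma nn_integral_inverse_ge:
  fixes f :: "'a \<Rightarrow> nat"
  assumes int: "integrable (measure_pmf p) (\<lambda>x. real (f x))"
    and mean: "measure_pmf.expectation p (\<lambda>x. real (f x)) \<le> m"
    and "m > 0" "c \<ge> 0"
  shows "ennreal (c / m - d)
    \<le> (\<integral>\<^sup>+x. (if f x = 0 then \<top> else ennreal (c / real (f x) - d)) \<partial>measure_pmf p)"
proof -
  define g where "g x = (2 * c / m - d) - c / m^2 * real (f x)" for x
  have "c / m - d \<le> (2 * c / m - d) - c / m^2 * measure_pmf.expectation p (\<lambda>x. real (f x))"
    using mean \<open>m > 0\<close> \<open>c \<ge> 0\<close> by (auto simp: field_simps power2_eq_square intro!: mult_left_mono)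
  also have "\<dots> = measure_pmf.expectation p g"
    unfolding g_def using int by simp
  finally have "ennreal (c / m - d) \<le> ennreal (measure_pmf.expectation p g)"
    by (rule ennreal_leI)
  also have "\<dots> \<le> (\<integral>\<^sup>+x. ennreal (g x) \<partial>measure_pmf p)"
    unfolding g_def using int by (intro ennreal_integral_le_nn_integral) simp
  also have "\<dots> \<le> (\<integral>\<^sup>+x. (if f x = 0 then \<top> else ennreal (c / real (f x) - d)) \<partial>measure_pmf p)"
  proof (intro nn_integral_mono)
    fix x
    show "ennreal (g x) \<le> (if f x = 0 then \<top> else ennreal (c / real (f x) - d))"
    proof (cases "f x = 0")
      case False
      have "c * (2 / m - real (f x) / m^2) \<le> c * (1 / real (f x))"
        using False \<open>m > 0\<close> \<open>c \<ge> 0\<close> by (intro mult_left_mono inverse_ge_tangent) auto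
      then show ?thesis
        using False by (auto simp: g_def right_diff_distrib mult.commute intro!: ennreal_leI)
    qed simp
  qed
  finally show ?thesis .
qed

lemma card_stratum_positions: "card (stratum_positions xs i (length xs)) = stratum_count xs i"
proof -
  have "stratum_positions xs i (length xs) = {k. k < length xs \<and> snd (xs ! k) = i}"
    by (auto simp: stratum_positions_def)
  then show ?thesis
    by (simp add: stratum_count_def stratum_vals_def length_filter_conv_card)
qed

lemma stratum_positions_append:
  "stratum_positions (xs @ ys) i (length xs) = stratum_positions xs i (length xs)"
  by (auto simp: stratum_positions_def nth_append)

lemma stratum_positions_mono: "t \<le> t' \<Longrightarrow> stratum_positions xs i t \<subseteq> stratum_positions xs i t'"
  by (auto simp: stratum_positions_def)

lemma stratum_sd_replicate: "stratum_vals xs i = replicate n a \<Longrightarrow> stratum_sd xs i = 0"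
  by (simp add: stratum_sd_def Let_def sum_list_replicate)

lemma stratum_sd_zeros_ones:
  assumes "stratum_vals xs i = replicate n 0 @ replicate n 1" "n > 0"
  shows "stratum_sd xs i = 1/2"
proof -
  have "map (\<lambda>y. (y - 1/2)^2) (replicate n (0::real) @ replicate n 1) = replicate (2 * n) (1/4)"
    by (simp add: replicate_add[symmetric] mult_2 power2_eq_square)
  then have "stratum_sd xs i = sqrt (1/4)"
    using assms by (simp add: stratum_sd_def Let_def sum_list_replicate)
  also have "\<dots> = 1/2" by (simp add: real_sqrt_divide)
  finally show ?thesis .
qed

definition zero_stream :: "nat \<Rightarrow> nat \<Rightarrow> stream" where
  "zero_stream r M = concat (map (\<lambda>k. replicate M (0, k)) [1..<Suc r])"

definition hard_stream :: "nat \<Rightarrow> nat \<Rightarrow> nat \<Rightarrow> stream" where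
  "hard_stream r M j = zero_stream r M @ replicate M (1, j)"

lemma length_zero_stream [simp]: "length (zero_stream r M) = r * M"
  by (induction r) (auto simp: zero_stream_def)

lemma length_hard_stream [simp]: "length (hard_stream r M j) = r * M + M"
  by (simp add: hard_stream_def)

lemma set_zero_stream: "set (zero_stream r M) \<subseteq> {0} \<times> {1..r}"
  by (induction r) (auto simp: zero_stream_def)

lemma valid_zero_stream: "valid_stream r (zero_stream r M)"
  using set_zero_stream[of r M] by (auto simp: valid_stream_def)

lemma valid_hard_stream: "j \<in> {1..r} \<Longrightarrow> valid_stream r (hard_stream r M j)"
  using set_zero_stream[of r M] by (auto simp: valid_stream_def hard_stream_def)

lemma filter_zero_stream:
  "i \<in> {1..r} \<Longrightarrow> filter (\<lambda>p. snd p = i) (zero_stream r M) = replicate M (0, i)"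
proof (induction r)
  case (Suc r)
  have "filter (\<lambda>p. snd p = Suc r) (zero_stream r M) = []"
    using set_zero_stream[of r M] by (auto simp: filter_empty_conv)
  with Suc show ?case
    by (cases "i = Suc r") (auto simp: zero_stream_def filter_replicate)
qed simp

lemma stratum_vals_hard_stream:
  assumes "i \<in> {1..r}" "j \<in> {1..r}"
  shows "stratum_vals (hard_stream r M j) i
       = (if i = j then replicate M 0 @ replicate M 1 else replicate M 0)"
  using filter_zero_stream[OF assms(1), of M] assms
  by (auto simp: stratum_vals_def hard_stream_def filter_replicate)

lemma stratum_count_hard_stream:
  "i \<in> {1..r} \<Longrightarrow> j \<in> {1..r} \<Longrightarrow> stratum_count (hard_stream r M j) i = (if i = j then 2 * M else M)"
  by (simp add: stratum_count_def stratum_vals_hard_stream)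

lemma stratum_count_zero_stream: "i \<in> {1..r} \<Longrightarrow> stratum_count (zero_stream r M) i = M"
  by (simp add: stratum_count_def stratum_vals_def filter_zero_stream)

lemma stratum_sd_hard_stream:
  "i \<in> {1..r} \<Longrightarrow> j \<in> {1..r} \<Longrightarrow> M > 0
    \<Longrightarrow> stratum_sd (hard_stream r M j) i = (if i = j then 1/2 else 0)"
  by (simp add: stratum_vals_hard_stream stratum_sd_zeros_ones stratum_sd_replicate)

lemma srs_variance_hard_stream:
  assumes j: "j \<in> {1..r}" and "M > 0"
  shows "srs_variance r (hard_stream r M j) s =
    (if s j = 0 then \<top>
     else ennreal (((real M)^2 / real (s j) - real M / 2) / (real (r * M + M))^2))"
proof -
  let ?n = "\<lambda>i. real (stratum_count (hard_stream r M j) i)"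
  let ?\<sigma> = "stratum_sd (hard_stream r M j)"
  have var: "?n i * (?\<sigma> i)^2 = (if i = j then real M / 2 else 0)"
    and var2: "(?n i)^2 * (?\<sigma> i)^2 / real (s i) = (if i = j then (real M)^2 / real (s j) else 0)"
    if "i \<in> {1..r}" for i
    using that j \<open>M > 0\<close>
    by (auto simp: stratum_count_hard_stream stratum_sd_hard_stream power2_eq_square)
  have infinite: "(\<exists>i\<in>{1..r}. s i = 0 \<and> ?n i * (?\<sigma> i)^2 \<noteq> 0) \<longleftrightarrow> s j = 0"
    using j \<open>M > 0\<close> by (auto simp: var)
  have sum1: "(\<Sum>i=1..r. ?n i * (?\<sigma> i)^2) = real M / 2"
    using j by (subst sum.cong[OF refl var]) (simp_all add: sum.delta')
  have sum2: "(\<Sum>i=1..r. (?n i)^2 * (?\<sigma> i)^2 / real (s i)) = (real M)^2 / real (s j)"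
    using j by (subst sum.cong[OF refl var2]) (simp_all add: sum.delta')
  show ?thesis
    unfolding srs_variance_def Let_def infinite sum1 sum2 by (simp add: diff_divide_distrib mult.commute)
qed

lemma opt_variance_hard_stream:
  assumes j: "j \<in> {1..r}" and "M > 0"
  shows "opt_variance r M (hard_stream r M j) = ennreal (real M / 2 / (real (r * M + M))^2)"
proof -
  let ?V = "srs_variance r (hard_stream r M j)"
  let ?S = "{s. (\<forall>i\<in>{1..r}. s i \<le> stratum_count (hard_stream r M j) i) \<and> (\<Sum>i=1..r. s i) = M}"
  define s\<^sub>0 where "s\<^sub>0 i = (if i = j then M else 0)" for i
  have "s\<^sub>0 \<in> ?S"
    using j by (auto simp: s\<^sub>0_def stratum_count_hard_stream sum.delta')
  moreover have "?V s\<^sub>0 = ennreal (real M / 2 / (real (r * M + M))^2)"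
    using \<open>M > 0\<close> by (simp add: srs_variance_hard_stream[OF assms] s\<^sub>0_def power2_eq_square)
  moreover have "ennreal (real M / 2 / (real (r * M + M))^2) \<le> ?V s" if "s \<in> ?S" for s
  proof (cases "s j = 0")
    case False
    have "s j \<le> (\<Sum>i=1..r. s i)" using j by (intro member_le_sum) auto
    with that have "s j \<le> M" by simp
    then have "real M / 2 \<le> (real M)^2 / real (s j) - real M / 2"
      using False by (simp add: power2_eq_square field_simps)
    then have "real M / 2 / (real (r * M + M))^2 \<le> ((real M)^2 / real (s j) - real M / 2) / (real (r * M + M))^2"
      by (rule divide_right_mono) simp
    then show ?thesis
      using False by (simp add: srs_variance_hard_stream[OF assms] ennreal_leI)
  qed (simp add: srs_variance_hard_stream[OF assms])
  ultimately show ?thesis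
    unfolding opt_variance_def by (intro antisym INF_greatest) (auto intro: INF_lower2)
qed

lemma integrable_card_measure_pmf:
  assumes "finite X" "\<And>x. x \<in> set_pmf p \<Longrightarrow> F x \<subseteq> X"
  shows "integrable (measure_pmf p) (\<lambda>x. real (card (F x)))"
  by (rule measure_pmf.integrable_const_bound[where B = "real (card X)"])
     (auto intro!: AE_pmfI card_mono assms)

lemma stratified_streaming_algD:
  assumes "stratified_streaming_alg r M A"
  shows stratified_streaming_alg_online:
      "\<And>xs ys t. valid_stream r xs \<Longrightarrow> valid_stream r ys \<Longrightarrow> t \<le> length xs \<Longrightarrow> t \<le> length ys
         \<Longrightarrow> take t xs = take t ys
         \<Longrightarrow> map_pmf (prefix_run t) (A xs) = map_pmf (prefix_run t) (A ys)"
    and stratified_streaming_alg_state: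
      "\<And>xs \<rho> t. valid_stream r xs \<Longrightarrow> \<rho> \<in> set_pmf (A xs) \<Longrightarrow> t \<le> length xs \<Longrightarrow>
         fst (\<rho> t) \<subseteq> {..<t} \<and> card (fst (\<rho> t)) \<le> M \<and>
         (t < length xs \<longrightarrow> fst (\<rho> (Suc t)) \<subseteq> fst (\<rho> t) \<union> {t}) \<and>
         (\<forall>i\<in>{1..r}. snd (\<rho> t) i \<subseteq> fst (\<rho> t) \<inter> stratum_positions xs i t)"
    and stratified_streaming_alg_exchangeable:
      "\<And>xs t i B C. valid_stream r xs \<Longrightarrow> t \<le> length xs \<Longrightarrow> i \<in> {1..r} \<Longrightarrow>
         B \<subseteq> stratum_positions xs i t \<Longrightarrow> C \<subseteq> stratum_positions xs i t \<Longrightarrow> card B = card C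
         \<Longrightarrow> measure_pmf.prob (A xs) {\<rho>. snd (\<rho> t) i = B}
           = measure_pmf.prob (A xs) {\<rho>. snd (\<rho> t) i = C}"
  using assms unfolding stratified_streaming_alg_def by blast+

lemma stored_subset_stored_Un:
  assumes alg: "stratified_streaming_alg r M A" and xs: "valid_stream r xs"
    and \<rho>: "\<rho> \<in> set_pmf (A xs)" and "t \<le> t'" "t' \<le> length xs"
  shows "fst (\<rho> t') \<subseteq> fst (\<rho> t) \<union> {t..<t'}"
  using assms(4,5)
proof (induction t' rule: dec_induct)
  case (step t')
  then have "fst (\<rho> (Suc t')) \<subseteq> fst (\<rho> t') \<union> {t'}"
    using stratified_streaming_alg_state[OF alg xs \<rho>, of t'] by auto
  with step show ?case by fastforce
qed simp

lemma exists_stratum_few_stored: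
  assumes alg: "stratified_streaming_alg r M A" and xs: "valid_stream r xs"
    and "t \<le> length xs" "r > 0"
  shows "\<exists>j\<in>{1..r}. measure_pmf.expectation (A xs)
           (\<lambda>\<rho>. real (card (fst (\<rho> t) \<inter> stratum_positions xs j t))) \<le> real M / real r"
proof (rule ccontr)
  define e where "e j = measure_pmf.expectation (A xs)
                    (\<lambda>\<rho>. real (card (fst (\<rho> t) \<inter> stratum_positions xs j t)))" for j
  have int: "integrable (measure_pmf (A xs)) (\<lambda>\<rho>. real (card (fst (\<rho> t) \<inter> stratum_positions xs j t)))" for j
    by (rule integrable_card_measure_pmf[of "stratum_positions xs j t"])
       (auto simp: stratum_positions_def)
  have pointwise: "(\<Sum>j=1..r. real (card (fst (\<rho> t) \<inter> stratum_positions xs j t))) \<le> real M"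
    if \<rho>: "\<rho> \<in> set_pmf (A xs)" for \<rho>
  proof -
    have stored: "fst (\<rho> t) \<subseteq> {..<t}" "card (fst (\<rho> t)) \<le> M"
      using stratified_streaming_alg_state[OF alg xs \<rho> \<open>t \<le> length xs\<close>] by auto
    then have "finite (fst (\<rho> t))" using finite_subset by blast
    then have "(\<Sum>j=1..r. card (fst (\<rho> t) \<inter> stratum_positions xs j t))
             = card (\<Union>j\<in>{1..r}. fst (\<rho> t) \<inter> stratum_positions xs j t)"
      by (intro card_UN_disjoint[symmetric]) (auto simp: stratum_positions_def)
    also have "\<dots> \<le> card (fst (\<rho> t))"
      using \<open>finite (fst (\<rho> t))\<close> by (intro card_mono) auto
    finally show ?thesis
      using stored(2) by (simp flip: of_nat_sum)
  qed
  have "(\<Sum>j=1..r. e j) \<le> real M"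
  proof -
    have "(\<Sum>j=1..r. e j) = measure_pmf.expectation (A xs)
            (\<lambda>\<rho>. \<Sum>j=1..r. real (card (fst (\<rho> t) \<inter> stratum_positions xs j t)))"
      unfolding e_def using int by (simp add: Bochner_Integration.integral_sum)
    also have "\<dots> \<le> measure_pmf.expectation (A xs) (\<lambda>\<rho>. real M)"
      using int pointwise by (intro integral_mono_AE AE_pmfI) auto
    finally show ?thesis by simp
  qed
  moreover assume "\<not> ?thesis"
  then have "(\<Sum>j=1..r. real M / real r) < (\<Sum>j=1..r. e j)"
    using \<open>r > 0\<close> by (intro sum_strict_mono) (auto simp: e_def not_le)
  ultimately show False
    using \<open>r > 0\<close> by simp
qed

text \<open>An element of the final sample that arrived before time \<open>length xs\<close> must have been
  stored at that time; and what is stored then does not depend on the rest of the stream.\<close>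
lemma expectation_old_sample_le_stored:
  assumes alg: "stratified_streaming_alg r M A"
    and xs: "valid_stream r xs" and xsys: "valid_stream r (xs @ ys)" and j: "j \<in> {1..r}"
  defines "X \<equiv> stratum_positions xs j (length xs)"
  shows "measure_pmf.expectation (A (xs @ ys))
           (\<lambda>\<rho>. real (card (snd (\<rho> (length (xs @ ys))) j \<inter> X)))
       \<le> measure_pmf.expectation (A xs) (\<lambda>\<rho>. real (card (fst (\<rho> (length xs)) \<inter> X)))"
proof -
  let ?t = "length xs" and ?stored = "\<lambda>\<rho>. real (card (fst (\<rho> (length xs)) \<inter> X))"
  have finX: "finite X" by (simp add: X_def stratum_positions_def)
  have old: "snd (\<rho> (length (xs @ ys))) j \<inter> X \<subseteq> fst (\<rho> ?t) \<inter> X"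
    if \<rho>: "\<rho> \<in> set_pmf (A (xs @ ys))" for \<rho>
  proof -
    have "snd (\<rho> (length (xs @ ys))) j \<subseteq> fst (\<rho> (length (xs @ ys)))"
      using stratified_streaming_alg_state[OF alg xsys \<rho>, of "length (xs @ ys)"] j by auto
    also have "\<dots> \<subseteq> fst (\<rho> ?t) \<union> {?t..<length (xs @ ys)}"
      by (rule stored_subset_stored_Un[OF alg xsys \<rho>]) auto
    finally show ?thesis by (auto simp: X_def stratum_positions_def)
  qed
  have "measure_pmf.expectation (A (xs @ ys)) (\<lambda>\<rho>. real (card (snd (\<rho> (length (xs @ ys))) j \<inter> X)))
      \<le> measure_pmf.expectation (A (xs @ ys)) ?stored"
  proof (rule integral_mono_AE)
    show "AE \<rho> in A (xs @ ys). real (card (snd (\<rho> (length (xs @ ys))) j \<inter> X)) \<le> ?stored \<rho>"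
    proof (rule AE_pmfI)
      fix \<rho> assume "\<rho> \<in> set_pmf (A (xs @ ys))"
      from card_mono[OF _ old[OF this]] finX
      show "real (card (snd (\<rho> (length (xs @ ys))) j \<inter> X)) \<le> ?stored \<rho>" by simp
    qed
  qed (use finX in \<open>auto intro!: integrable_card_measure_pmf[of X]\<close>)
  also have "\<dots> = measure_pmf.expectation (map_pmf (prefix_run ?t) (A (xs @ ys))) ?stored"
    by (simp add: prefix_run_def)
  also have "map_pmf (prefix_run ?t) (A (xs @ ys)) = map_pmf (prefix_run ?t) (A xs)"
    by (rule stratified_streaming_alg_online[OF alg xsys xs]) auto
  also have "measure_pmf.expectation \<dots> ?stored = measure_pmf.expectation (A xs) ?stored"
    by (simp add: prefix_run_def)
  finally show ?thesis .
qed

text \<open>By exchangeability every position of stratum \<open>i\<close> is sampled with the same probability.\<close>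
lemma expectation_sample_Int:
  assumes alg: "stratified_streaming_alg r M A" and xs: "valid_stream r xs"
    and i: "i \<in> {1..r}" and X: "X \<subseteq> stratum_positions xs i (length xs)"
  shows "real (stratum_count xs i)
           * measure_pmf.expectation (A xs) (\<lambda>\<rho>. real (card (snd (\<rho> (length xs)) i \<inter> X)))
       = real (card X) * measure_pmf.expectation (A xs) (\<lambda>\<rho>. real (card (snd (\<rho> (length xs)) i)))"
proof -
  let ?P = "stratum_positions xs i (length xs)"
  define Q where "Q = map_pmf (\<lambda>\<rho>. snd (\<rho> (length xs)) i) (A xs)"
  have finP: "finite ?P" by (simp add: stratum_positions_def)
  have supp: "set_pmf Q \<subseteq> Pow ?P"
  proof
    fix B assume "B \<in> set_pmf Q"
    then obtain \<rho> where \<rho>: "\<rho> \<in> set_pmf (A xs)" and B: "B = snd (\<rho> (length xs)) i"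
      by (auto simp: Q_def)
    show "B \<in> Pow ?P"
      using stratified_streaming_alg_state[OF alg xs \<rho> order_refl] i B by auto
  qed
  have exch: "pmf Q B = pmf Q C" if "B \<subseteq> ?P" "C \<subseteq> ?P" "card B = card C" for B C
    using stratified_streaming_alg_exchangeable[OF alg xs order_refl i that]
    by (simp add: Q_def pmf_map vimage_def)
  have "real (card ?P) * measure_pmf.expectation Q (\<lambda>B. real (card (B \<inter> X)))
      = real (card X) * measure_pmf.expectation Q (\<lambda>B. real (card B))"
    by (rule expectation_card_Int_exchangeable[OF finP X supp exch])
  then show ?thesis
    unfolding Q_def integral_map_pmf card_stratum_positions .
qed


lemma hard_stream_sample_small:
  assumes alg: "stratified_streaming_alg r M A" and "2 \<le> r" "0 < M"
  obtains j where "j \<in> {1..r}" "measure_pmf.expectation (A (hard_stream r M j))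
      (\<lambda>\<rho>. real (card (snd (\<rho> (r * M + M)) j))) \<le> 2 * real M / real r"
proof -
  let ?xs = "zero_stream r M"
  obtain j where j: "j \<in> {1..r}" and few: "measure_pmf.expectation (A ?xs)
      (\<lambda>\<rho>. real (card (fst (\<rho> (r * M)) \<inter> stratum_positions ?xs j (r * M)))) \<le> real M / real r"
    using exists_stratum_few_stored[OF alg valid_zero_stream[of r M], of "r * M"] \<open>2 \<le> r\<close> by auto
  let ?ys = "replicate M (1, j)"
  define X where "X = hard_stream r M j"
  define Old where "Old = stratum_positions ?xs j (r * M)"
  define S where "S \<rho> = snd (\<rho> (length X)) j" for \<rho> :: run
  have X: "X = ?xs @ ?ys" by (simp add: X_def hard_stream_def)
  have vX: "valid_stream r X" using valid_hard_stream[OF j] by (simp add: X_def)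
  have old: "measure_pmf.expectation (A X) (\<lambda>\<rho>. real (card (S \<rho> \<inter> Old))) \<le> real M / real r"
    using expectation_old_sample_le_stored[OF alg valid_zero_stream[of r M], where ys = ?ys and j = j] few j vX
    by (simp add: X S_def Old_def)
  have "Old = stratum_positions X j (r * M)"
    using stratum_positions_append[of ?xs ?ys j] by (simp add: X Old_def)
  then have "Old \<subseteq> stratum_positions X j (length X)"
    by (simp add: X stratum_positions_mono)
  then have "real (2 * M) * measure_pmf.expectation (A X) (\<lambda>\<rho>. real (card (S \<rho> \<inter> Old)))
      = real M * measure_pmf.expectation (A X) (\<lambda>\<rho>. real (card (S \<rho>)))"
    using expectation_sample_Int[OF alg vX j] j card_stratum_positions[of ?xs j]
    by (simp add: S_def Old_def X_def stratum_count_hard_stream stratum_count_zero_stream)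
  with \<open>0 < M\<close> have "measure_pmf.expectation (A X) (\<lambda>\<rho>. real (card (S \<rho>)))
      = 2 * measure_pmf.expectation (A X) (\<lambda>\<rho>. real (card (S \<rho> \<inter> Old)))"
    by simp
  with old that j show thesis
    by (simp add: S_def X_def)
qed

lemma hard_stream_lower_bound:
  assumes alg: "stratified_streaming_alg r M A" and "2 \<le> r" "0 < M"
  obtains j where "j \<in> {1..r}"
    "ennreal (real r / 4) * opt_variance r M (hard_stream r M j)
       \<le> (\<integral>\<^sup>+\<rho>. alg_variance r (hard_stream r M j) \<rho> \<partial>measure_pmf (A (hard_stream r M j)))"
proof -
  obtain j where j: "j \<in> {1..r}" and "measure_pmf.expectation (A (hard_stream r M j))
      (\<lambda>\<rho>. real (card (snd (\<rho> (r * M + M)) j))) \<le> 2 * real M / real r"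
    using hard_stream_sample_small[OF assms] by blast
  define X where "X = hard_stream r M j"
  define S where "S \<rho> = snd (\<rho> (length X)) j" for \<rho> :: run
  define N where "N = real (r * M + M)"
  have mean: "measure_pmf.expectation (A X) (\<lambda>\<rho>. real (card (S \<rho>))) \<le> 2 * real M / real r"
    using \<open>measure_pmf.expectation _ _ \<le> _\<close> by (simp add: S_def X_def)
  have int: "integrable (measure_pmf (A X)) (\<lambda>\<rho>. real (card (S \<rho>)))"
  proof (rule integrable_card_measure_pmf)
    show "finite (stratum_positions X j (length X))" by (simp add: stratum_positions_def)
    show "S \<rho> \<subseteq> stratum_positions X j (length X)" if "\<rho> \<in> set_pmf (A X)" for \<rho>
      using stratified_streaming_alg_state[OF alg _ that order_refl] valid_hard_stream[OF j] j
      by (auto simp: S_def X_def)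
  qed
  have "ennreal (real r / 4) * opt_variance r M X = ennreal (real r / 4 * (real M / 2 / N^2))"
    unfolding X_def opt_variance_hard_stream[OF j \<open>0 < M\<close>] N_def by (rule ennreal_mult'[symmetric]) simp
  also have "\<dots> \<le> ennreal ((real M)^2 / N^2 / (2 * real M / real r) - real M / 2 / N^2)"
  proof (intro ennreal_leI)
    have "N > 0" unfolding N_def of_nat_0_less_iff using \<open>0 < M\<close> by simp
    moreover have "real r * real M / 8 \<le> real r * real M / 2 - real M / 2"
      using \<open>2 \<le> r\<close> \<open>0 < M\<close> by (simp add: field_simps)
    ultimately show "real r / 4 * (real M / 2 / N^2) \<le> (real M)^2 / N^2 / (2 * real M / real r) - real M / 2 / N^2"
      using \<open>2 \<le> r\<close> \<open>0 < M\<close> by (simp add: field_simps power2_eq_square)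
  qed
  also have "\<dots> \<le> (\<integral>\<^sup>+\<rho>. (if card (S \<rho>) = 0 then \<top>
      else ennreal ((real M)^2 / N^2 / real (card (S \<rho>)) - real M / 2 / N^2)) \<partial>measure_pmf (A X))"
    using \<open>2 \<le> r\<close> \<open>0 < M\<close> by (intro nn_integral_inverse_ge[OF int mean]) auto
  also have "\<dots> = (\<integral>\<^sup>+\<rho>. alg_variance r X \<rho> \<partial>measure_pmf (A X))"
    unfolding alg_variance_def srs_variance_hard_stream[OF j \<open>0 < M\<close>, folded X_def]
    by (intro nn_integral_cong) (simp add: S_def N_def diff_divide_distrib divide_divide_eq_left mult.commute)
  finally show thesis
    using that j by (simp add: X_def)
qed

theorem theorem4:
  shows "\<exists>c::real. c > 0 \<and>
    (\<forall>r M::nat. 2 \<le> r \<and> r < M \<longrightarrow>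
      (\<forall>A. stratified_streaming_alg r M A \<longrightarrow>
        (\<exists>xs. valid_stream r xs \<and>
              0 < opt_variance r M xs \<and> opt_variance r M xs < \<top> \<and>
              (\<integral>\<^sup>+ \<rho>. alg_variance r xs \<rho> \<partial>measure_pmf (A xs))
                \<ge> ennreal (c * real r) * opt_variance r M xs)))"
proof (intro exI[of _ "1/4"] conjI allI impI)
  fix r M :: nat and A
  assume "2 \<le> r \<and> r < M" and alg: "stratified_streaming_alg r M A"
  then have "2 \<le> r" "0 < M" by auto
  then have pos: "0 < real M / 2 / (real (r * M + M))^2"
    by (intro divide_pos_pos zero_less_power of_nat_0_less_iff[THEN iffD2]) simp_all
  obtain j where j: "j \<in> {1..r}" and bound:
    "ennreal (real r / 4) * opt_variance r M (hard_stream r M j)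
       \<le> (\<integral>\<^sup>+\<rho>. alg_variance r (hard_stream r M j) \<rho> \<partial>measure_pmf (A (hard_stream r M j)))"
    using hard_stream_lower_bound[OF alg \<open>2 \<le> r\<close> \<open>0 < M\<close>] by blast
  show "\<exists>xs. valid_stream r xs \<and> 0 < opt_variance r M xs \<and> opt_variance r M xs < \<top> \<and>
      (\<integral>\<^sup>+ \<rho>. alg_variance r xs \<rho> \<partial>measure_pmf (A xs))
        \<ge> ennreal (1/4 * real r) * opt_variance r M xs"
    using valid_hard_stream[OF j] opt_variance_hard_stream[OF j \<open>0 < M\<close>] bound pos
    by (intro exI[of _ "hard_stream r M j"]) auto
qed simp

end
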